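(* Let $h,J\in\mathbb{R}$ with $J\neq 0$, let $\Gamma_{abs}>0$ and $\Gamma^z_{dph}>0$. Consider the two-qubit battery Hamiltonian $H_B$ and initial state $\rho_0$ described in the context, and for $\Gamma\ge 0$ let $\rho^{(\Gamma)}_t$ be the solution of the master equation $$\frac{d\rho}{dt}=-i[H_B,\rho]+\Gamma_{abs}\sum_{j=1}^{2}\Big(\sigma^+_j\rho\,\sigma^-_j-\tfrac12\{\sigma^-_j\sigma^+_j,\rho\}\Big)+\Gamma\sum_{j=1}^{2}\big(\sigma^z_j\rho\,\sigma^z_j-\rho\big),\qquad \rho(0)=\rho_0 .$$ Define the work gained $W_\Gamma(t)=\mathrm{Tr}(H_B\rho^{(\Gamma)}_t)-\mathrm{Tr}(H_B\rho_0)$. Then, in the transient regime, the work gained with local phase-flip noise exceeds the work gained without noise: there exists $t^*>0$ such that $W_{\Gamma^z_{dph}}(t)>W_0(t)$ for all $0<t<t^*$.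
   Context: Two qubits with computational basis $|00\rangle,|01\rangle,|10\rangle,|11\rangle$, where $\sigma^z|0\rangle=|0\rangle$, $\sigma^z|1\rangle=-|1\rangle$. $\sigma^x,\sigma^y,\sigma^z$ are the Pauli matrices, $\sigma^{\pm}=(\sigma^x\pm i\sigma^y)/2$, and $\sigma^a_1=\sigma^a\otimes I$, $\sigma^a_2=I\otimes\sigma^a$. The battery Hamiltonian (two-spin transverse Ising model) is, in the computational basis, $$H_B=\begin{pmatrix} h&0&0&J/4\\ 0&0&J/4&0\\ 0&J/4&0&0\\ J/4&0&0&-h\end{pmatrix}.$$ Set $e_0=-\sqrt{h^2+\tfrac{5J^2}{8}}$, $p=\frac{4(h+e_0)}{J}$, and let the initial state be $$\rho_0=\frac{1}{1+p^2}\begin{pmatrix} p^2&0&0&p\\ 0&0&0&0\\ 0&0&0&0\\ p&0&0&1\end{pmatrix}.$$ The terms with $\Gamma_{abs}$ model a local bosonic reservoir charging each spin (absorption channel); the terms with $\Gamma$ model local phase-flip (dephasing along $z$) noise on each spin; $\Gamma=0$ is the noiseless case. *)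

theory Defs
  imports "HOL-Analysis.Analysis" "HOL-Library.Numeral_Type"
begin

text \<open>Computational basis of one qubit: index 0 = |0>, index 1 = |1>.
Two qubits: index 2*a+b of type 4 corresponds to |ab> (qubit 1 = first tensor factor),
so indices 0,1,2,3 are |00>,|01>,|10>,|11>.\<close>

type_synonym mat2 = "complex^2^2"
type_synonym mat4 = "complex^4^4"

definition idx2 :: "2 \<Rightarrow> nat" where "idx2 i = nat (Rep_bit0 i)"
definition idx4 :: "4 \<Rightarrow> nat" where "idx4 i = nat (Rep_bit0 i)"

definition m2 :: "complex list list \<Rightarrow> mat2" where
  "m2 L = (\<chi> i j. L ! idx2 i ! idx2 j)"
definition m4 :: "complex list list \<Rightarrow> mat4" where
  "m4 L = (\<chi> i j. L ! idx4 i ! idx4 j)"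

definition kron :: "mat2 \<Rightarrow> mat2 \<Rightarrow> mat4" where
  "kron A B = (\<chi> i j. A $ of_nat (idx4 i div 2) $ of_nat (idx4 j div 2)
                       * B $ of_nat (idx4 i mod 2) $ of_nat (idx4 j mod 2))"

definition smat :: "complex \<Rightarrow> mat4 \<Rightarrow> mat4" where
  "smat c M = (\<chi> i j. c * M $ i $ j)"

definition smat2 :: "complex \<Rightarrow> mat2 \<Rightarrow> mat2" where
  "smat2 c M = (\<chi> i j. c * M $ i $ j)"

definition I2 :: mat2 where "I2 = mat 1"
definition sx :: mat2 where "sx = m2 [[0,1],[1,0]]"
definition sy :: mat2 where "sy = m2 [[0,-\<i>],[\<i>,0]]"
definition sz :: mat2 where "sz = m2 [[1,0],[0,-1]]"
definition splus :: mat2 where "splus = smat2 (1/2) (sx + smat2 \<i> sy)"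
definition sminus :: mat2 where "sminus = smat2 (1/2) (sx - smat2 \<i> sy)"

definition site :: "nat \<Rightarrow> mat2 \<Rightarrow> mat4" where
  "site j A = (if j = 1 then kron A I2 else kron I2 A)"

definition HB :: "real \<Rightarrow> real \<Rightarrow> mat4" where
  "HB h J = m4 [[h, 0, 0, J/4],
               [0, 0, J/4, 0],
               [0, J/4, 0, 0],
               [J/4, 0, 0, -h]]"

definition e0 :: "real \<Rightarrow> real \<Rightarrow> real" where
  "e0 h J = - sqrt (h\<^sup>2 + 5 * J\<^sup>2 / 8)"

definition pp :: "real \<Rightarrow> real \<Rightarrow> real" where
  "pp h J = 4 * (h + e0 h J) / J"

definition rho0 :: "real \<Rightarrow> real \<Rightarrow> mat4" where
  "rho0 h J = (let p = pp h J in
     smat (1 / (1 + p\<^sup>2)) (m4 [[p\<^sup>2, 0, 0, p], [0,0,0,0], [0,0,0,0], [p, 0, 0, 1]]))"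

definition comm :: "mat4 \<Rightarrow> mat4 \<Rightarrow> mat4" where "comm A B = A ** B - B ** A"
definition acomm :: "mat4 \<Rightarrow> mat4 \<Rightarrow> mat4" where "acomm A B = A ** B + B ** A"

definition lindblad :: "real \<Rightarrow> real \<Rightarrow> real \<Rightarrow> real \<Rightarrow> mat4 \<Rightarrow> mat4" where
  "lindblad h J Gabs G \<rho> =
     smat (-\<i>) (comm (HB h J) \<rho>)
     + Gabs *\<^sub>R (\<Sum>j\<in>{1,2::nat}. site j splus ** \<rho> ** site j sminus
                    - smat (1/2) (acomm (site j sminus ** site j splus) \<rho>))
     + G *\<^sub>R (\<Sum>j\<in>{1,2::nat}. site j sz ** \<rho> ** site j sz - \<rho>)"

definition is_solution :: "real \<Rightarrow> real \<Rightarrow> real \<Rightarrow> real \<Rightarrow> (real \<Rightarrow> mat4) \<Rightarrow> bool" where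
  "is_solution h J Gabs G \<rho> \<longleftrightarrow>
     \<rho> 0 = rho0 h J \<and>
     (\<forall>t\<ge>0. (\<rho> has_vector_derivative lindblad h J Gabs G (\<rho> t)) (at t within {0..}))"

definition work :: "real \<Rightarrow> real \<Rightarrow> mat4 \<Rightarrow> real" where
  "work h J \<rho> = Re (trace (HB h J ** \<rho>)) - Re (trace (HB h J ** rho0 h J))"

end

theory Submission
  imports Defs
begin

text \<open>Both evolutions start in rho0 and their generators differ only by the dephasing term
  Gamma D, so the difference of the two work curves vanishes at t = 0 and has right derivative
  Gamma Tr(H_B D(rho0)) there. Dephasing multiplies the coherences between |00> and |11> and
  between |01> and |10> by -4, hence Tr(H_B D(rho0)) = -2 J p / (1 + p^2), which is positive
  because |h| < sqrt(h^2 + 5 J^2 / 8) forces J p < 0.\<close>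

lemma idx2_simps [simp]: "idx2 0 = 0" "idx2 1 = 1"
  by (simp_all add: idx2_def bit0.Rep_0 bit0.Rep_1)

lemma idx4_simps [simp]: "idx4 0 = 0" "idx4 1 = 1" "idx4 2 = 2" "idx4 3 = 3"
  by (simp_all add: idx4_def bit0.Rep_numeral bit0.Rep_0 bit0.Rep_1)

lemma UNIV_4_eq: "(UNIV :: 4 set) = {0, 1, 2, 3}"
proof -
  have "(4 :: 4) = 0"
    by (simp add: Rep_bit0_inject[symmetric] bit0.Rep_numeral bit0.Rep_0)
  then show ?thesis
    using UNIV_4 by auto
qed

lemma sum_UNIV_4: "sum f (UNIV :: 4 set) = f 0 + f 1 + f 2 + f 3"
  unfolding UNIV_4_eq by (simp add: ac_simps)

lemma all_4: "(\<forall>i :: 4. P i) \<longleftrightarrow> P 0 \<and> P 1 \<and> P 2 \<and> P 3"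
  by (metis UNIV_4_eq UNIV_I insertE empty_iff)

lemma bounded_linear_Re_trace_mult:
  fixes A :: "complex^'n^'n"
  shows "bounded_linear (\<lambda>M. Re (trace (A ** M)))"
proof -
  have "linear (\<lambda>M. Re (trace (A ** M)))"
    by (rule linearI)
      (simp_all add: trace_def matrix_matrix_mult_def distrib_left sum.distrib
        sum_distrib_left mult.left_commute)
  then show ?thesis
    by (simp add: linear_conv_bounded_linear)
qed

lemma diagonal_sandwich_entry:
  fixes S \<rho> :: "'a::semiring_1^'n^'n"
  assumes "\<And>i j. S $ i $ j = (if i = j then d i else 0)"
  shows "(S ** \<rho> ** S) $ i $ j = d i * \<rho> $ i $ j * d j"
  unfolding matrix_matrix_mult_def vec_lambda_beta assms
  by (simp add: if_distrib if_distribR cong: if_cong)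

definition dephasing :: "mat4 \<Rightarrow> mat4" where
  "dephasing \<rho> = (\<Sum>j\<in>{1,2::nat}. site j sz ** \<rho> ** site j sz - \<rho>)"

lemma lindblad_split_dephasing:
  "lindblad h J Gabs G \<rho> = lindblad h J Gabs 0 \<rho> + G *\<^sub>R dephasing \<rho>"
  unfolding lindblad_def dephasing_def by simp

definition zsign1 :: "4 \<Rightarrow> complex" where
  "zsign1 i = (if i = 0 \<or> i = 1 then 1 else -1)"

definition zsign2 :: "4 \<Rightarrow> complex" where
  "zsign2 i = (if i = 0 \<or> i = 2 then 1 else -1)"

lemma site1_sz_entry: "site 1 sz $ i $ j = (if i = j then zsign1 i else 0)"
proof -
  have "\<forall>i j. site 1 sz $ i $ j = (if i = j then zsign1 i else 0)"
    unfolding all_4 site_def kron_def sz_def I2_def m2_def zsign1_def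
    by (simp add: mat_def)
  then show ?thesis by blast
qed

lemma site2_sz_entry: "site 2 sz $ i $ j = (if i = j then zsign2 i else 0)"
proof -
  have "\<forall>i j. site 2 sz $ i $ j = (if i = j then zsign2 i else 0)"
    unfolding all_4 site_def kron_def sz_def I2_def m2_def zsign2_def
    by (simp add: mat_def)
  then show ?thesis by blast
qed

lemma dephasing_entry:
  "dephasing \<rho> $ i $ j = (zsign1 i * zsign1 j + zsign2 i * zsign2 j - 2) * \<rho> $ i $ j"
  using diagonal_sandwich_entry[OF site1_sz_entry, of \<rho> i j]
    diagonal_sandwich_entry[OF site2_sz_entry, of \<rho> i j]
  unfolding dephasing_def by (simp add: algebra_simps)

lemma trace_HB_dephasing:
  "trace (HB h J ** dephasing \<rho>) = - of_real J * (\<rho>$0$3 + \<rho>$3$0 + \<rho>$1$2 + \<rho>$2$1)"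
  unfolding trace_def matrix_matrix_mult_def
  by (simp add: sum_UNIV_4 dephasing_entry zsign1_def zsign2_def HB_def m4_def algebra_simps)

lemma J_mult_pp_neg:
  assumes "J \<noteq> 0"
  shows "J * pp h J < 0"
proof -
  have "sqrt (h\<^sup>2) < sqrt (h\<^sup>2 + 5 * J\<^sup>2 / 8)"
    using assms by (intro real_sqrt_less_mono) simp
  then have "h < sqrt (h\<^sup>2 + 5 * J\<^sup>2 / 8)"
    by (metis abs_ge_self le_less_trans real_sqrt_abs)
  then show ?thesis
    using assms unfolding pp_def e0_def by simp
qed

lemma dephasing_energy_rate_pos:
  assumes "J \<noteq> 0"
  shows "0 < Re (trace (HB h J ** dephasing (rho0 h J)))"
proof -
  let ?p = "pp h J"
  have "Re (trace (HB h J ** dephasing (rho0 h J))) = -2 * (J * ?p) / (1 + ?p\<^sup>2)"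
    unfolding trace_HB_dephasing by (simp add: rho0_def Let_def m4_def smat_def)
  also have "\<dots> > 0"
    using J_mult_pp_neg[OF assms, of h] by (intro divide_pos_pos) (simp_all add: add_pos_nonneg)
  finally show ?thesis .
qed

lemma energy_has_real_derivative_at_start:
  assumes "is_solution h J Gabs G \<rho>"
  shows "((\<lambda>t. Re (trace (HB h J ** \<rho> t))) has_real_derivative
           Re (trace (HB h J ** lindblad h J Gabs G (rho0 h J)))) (at 0 within {0..})"
proof -
  have "\<rho> 0 = rho0 h J"
    and "\<forall>t\<ge>0. (\<rho> has_vector_derivative lindblad h J Gabs G (\<rho> t)) (at t within {0..})"
    using assms unfolding is_solution_def by auto
  then have "(\<rho> has_vector_derivative lindblad h J Gabs G (rho0 h J)) (at 0 within {0..})"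
    by auto
  then show ?thesis
    unfolding has_real_derivative_iff_has_vector_derivative
    by (rule bounded_linear.has_vector_derivative[OF bounded_linear_Re_trace_mult])
qed

lemma less_near_right_of_derivative_less:
  fixes f g :: "real \<Rightarrow> real"
  assumes "(f has_real_derivative f') (at a within {a..})"
    and "(g has_real_derivative g') (at a within {a..})"
    and "f a = g a" and "f' < g'"
  shows "\<exists>d>0. \<forall>t. a < t \<and> t < a + d \<longrightarrow> f t < g t"
proof -
  have "((\<lambda>t. g t - f t) has_real_derivative g' - f') (at a within {a..})"
    using assms(2,1) by (rule DERIV_diff)
  moreover have "0 < g' - f'"
    using assms(4) by simp
  ultimately obtain d where "d > 0"
    and d: "\<And>s. 0 < s \<Longrightarrow> a + s \<in> {a..} \<Longrightarrow> s < d \<Longrightarrow> g a - f a < g (a + s) - f (a + s)"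
    by (blast dest: has_real_derivative_pos_inc_right)
  have "f t < g t" if "a < t" "t < a + d" for t
    using d[of "t - a"] that assms(3) by simp
  then show ?thesis
    using \<open>d > 0\<close> by blast
qed

theorem theorem1:
  fixes h J Gabs Gdph :: real and \<rho>N \<rho>0 :: "real \<Rightarrow> mat4"
  assumes "J \<noteq> 0" and "Gabs > 0" and "Gdph > 0"
    and "is_solution h J Gabs Gdph \<rho>N"
    and "is_solution h J Gabs 0 \<rho>0"
  shows "\<exists>tstar>0. \<forall>t. 0 < t \<and> t < tstar \<longrightarrow> work h J (\<rho>N t) > work h J (\<rho>0 t)"
proof -
  let ?E = "\<lambda>M. Re (trace (HB h J ** M))"
  have "?E (lindblad h J Gabs Gdph (rho0 h J))
      = ?E (lindblad h J Gabs 0 (rho0 h J)) + Gdph * ?E (dephasing (rho0 h J))"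
  proof -
    interpret E: bounded_linear ?E
      by (rule bounded_linear_Re_trace_mult)
    show ?thesis
      by (subst lindblad_split_dephasing) (simp add: E.add E.scaleR)
  qed
  then have rates: "?E (lindblad h J Gabs 0 (rho0 h J)) < ?E (lindblad h J Gabs Gdph (rho0 h J))"
    using dephasing_energy_rate_pos[OF assms(1)] assms(3) by simp
  have "?E (\<rho>0 0) = ?E (\<rho>N 0)"
    using assms(4,5) unfolding is_solution_def by simp
  then obtain d where "d > 0" and "\<forall>t. 0 < t \<and> t < 0 + d \<longrightarrow> ?E (\<rho>0 t) < ?E (\<rho>N t)"
    using less_near_right_of_derivative_less[OF energy_has_real_derivative_at_start[OF assms(5)]
        energy_has_real_derivative_at_start[OF assms(4)] _ rates] by blast
  then show ?thesis
    unfolding work_def by auto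
qed

end
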